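(* Let $N\ge2$. Let $Z_1,\dots,Z_N,V$ be independent random variables, where $V$ has Beta distribution with parameters $(1/(N-1),1)$ and each $Z_i$ has Gamma distribution with shape $1/(N-1)$ and scale $1$. Let $Z$ and $U=(U_1,\dots,U_N)$ be independent, with $Z$ Gamma distributed with shape $1/(N-1)$ and scale $1$, and $U$ Dirichlet distributed with parameters $(1/(N-1),\dots,1/(N-1))$. Then $(ZU_1,\dots,ZU_N)$ and $(VZ_1,\dots,VZ_N)$ have the same distribution. *)

theory Defs
  imports "HOL-Probability.Probability"
begin

definition gamma_density :: "real \<Rightarrow> real \<Rightarrow> real" where
  "gamma_density a x = (if 0 < x then x powr (a - 1) * exp (- x) / Gamma a else 0)"

definition beta_density :: "real \<Rightarrow> real \<Rightarrow> real \<Rightarrow> real" where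
  "beta_density a b x =
     (if 0 < x \<and> x < 1 then x powr (a - 1) * (1 - x) powr (b - 1) / Beta a b else 0)"

text \<open>As usual it is given by the density of the first N-1
  coordinates on the open simplex (w.r.t. Lebesgue measure), the last coordinate
  being 1 minus the sum of the others.\<close>
definition dirichlet_density :: "nat \<Rightarrow> (nat \<Rightarrow> real) \<Rightarrow> (nat \<Rightarrow> real) \<Rightarrow> real" where
  "dirichlet_density N alpha u =
     (let v = (\<lambda>i. if i < N - 1 then u i else 1 - (\<Sum>j<N - 1. u j)) in
      if (\<forall>i<N. 0 < v i)
      then Gamma (\<Sum>i<N. alpha i) / (\<Prod>i<N. Gamma (alpha i)) * (\<Prod>i<N. v i powr (alpha i - 1))
      else 0)"

definition dirichlet_measure :: "nat \<Rightarrow> (nat \<Rightarrow> real) \<Rightarrow> (nat \<Rightarrow> real) measure" where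
  "dirichlet_measure N alpha =
     distr (density (PiM {..<N - 1} (\<lambda>_. lborel)) (\<lambda>u. ennreal (dirichlet_density N alpha u)))
           (PiM {..<N} (\<lambda>_. borel))
           (\<lambda>u. \<lambda>i\<in>{..<N}. if i < N - 1 then u i else 1 - (\<Sum>j<N - 1. u j))"

end

theory Submission
  imports Defs "HOL-Real_Asymp.Real_Asymp"
begin

(* Write a = 1/n with n = N - 1 and s = x_1 + ... + x_N.  Both vectors have the Lebesgue density
     f(x) = a Gamma(a)^(-N) (prod_i x_i^(a-1)) e^(-s) / s      on the open positive orthant.
   For V (Z_1, ..., Z_N): given V = v the vector has density v^(-N) prod_i g(x_i / v), with g the
   Gamma(a) density; against the Beta(a, 1) density a v^(a-1) all powers of v collapse to v^(-2),
   because a n = 1, and the integral of e^(-s/v) / v^2 over (0, 1) is e^(-s) / s.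
   For Z U: the map (z, u_1, ..., u_n) |-> z (u_1, ..., u_n, 1 - u_1 - ... - u_n) has Jacobian
   z^n, so Z U has density g(s) s^(-n) D(x / s) with D the Dirichlet density; since
   Gamma(N a) = Gamma(1 + a) = a Gamma(a), the powers of s collapse to s^(-1) and this is f again. *)

section \<open>Integrals over finite products of Lebesgue measure\<close>

lemma nn_integral_PiM_lborel_scale:
  fixes c :: real
  assumes "finite I" "0 < c" "f \<in> borel_measurable (PiM I (\<lambda>_. lborel))"
  shows "(\<integral>\<^sup>+x. f (\<lambda>i\<in>I. c * x i) \<partial>PiM I (\<lambda>_. lborel))
         = ennreal (1 / c ^ card I) * (\<integral>\<^sup>+x. f x \<partial>PiM I (\<lambda>_. lborel))"
  using assms(1,3)
proof (induction I arbitrary: f rule: finite_induct)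
  case empty
  then show ?case by (simp add: PiM_empty nn_integral_count_space_finite)
next
  case (insert i I)
  interpret P: product_sigma_finite "\<lambda>_. lborel" ..
  interpret PI: sigma_finite_measure "PiM I (\<lambda>_. lborel)"
    using P.sigma_finite insert.hyps(1) by blast
  note [measurable] = insert.prems
  have "(\<integral>\<^sup>+x. f (\<lambda>j\<in>insert i I. c * x j) \<partial>PiM (insert i I) (\<lambda>_. lborel))
      = (\<integral>\<^sup>+y. (\<integral>\<^sup>+x. f ((\<lambda>j\<in>I. c * x j)(i := c * y)) \<partial>PiM I (\<lambda>_. lborel)) \<partial>lborel)"
    using insert.hyps
    by (subst P.product_nn_integral_insert_rev)
       (auto intro!: nn_integral_cong arg_cong[where f=f]
             simp: space_PiM PiE_def extensional_def fun_eq_iff)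
  also have "\<dots> = (\<integral>\<^sup>+y. ennreal (1 / c ^ card I) * (\<integral>\<^sup>+x. f (x(i := c * y)) \<partial>PiM I (\<lambda>_. lborel)) \<partial>lborel)"
    by (intro nn_integral_cong insert.IH) measurable
  also have "\<dots> = ennreal (1 / c ^ card I) * (\<integral>\<^sup>+y. (\<integral>\<^sup>+x. f (x(i := 0 + c * y)) \<partial>PiM I (\<lambda>_. lborel)) \<partial>lborel)"
    by (subst nn_integral_cmult) (auto intro!: PI.borel_measurable_nn_integral)
  also have "\<dots> = ennreal (1 / c ^ card I) * (ennreal (1 / c) * (\<integral>\<^sup>+y. (\<integral>\<^sup>+x. f (x(i := y)) \<partial>PiM I (\<lambda>_. lborel)) \<partial>lborel))"
    using \<open>0 < c\<close>
    by (subst nn_integral_real_affine[where c=c and t=0])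
       (auto intro!: PI.borel_measurable_nn_integral simp: ennreal_mult'[symmetric] mult.assoc[symmetric])
  also have "\<dots> = ennreal (1 / c ^ card (insert i I)) * (\<integral>\<^sup>+x. f x \<partial>PiM (insert i I) (\<lambda>_. lborel))"
    using insert.hyps \<open>0 < c\<close>
    by (subst P.product_nn_integral_insert_rev)
       (auto simp: mult.assoc[symmetric] ennreal_mult'[symmetric] mult.commute)
  finally show ?case .
qed

lemma nn_integral_PiM_lborel_scale_density:
  assumes "finite I" "0 < v" "\<And>x. 0 \<le> D x"
    and [measurable]: "D \<in> borel_measurable (PiM I (\<lambda>_. lborel))" "f \<in> borel_measurable (PiM I (\<lambda>_. lborel))"
  shows "(\<integral>\<^sup>+x. ennreal (D x) * f (\<lambda>i\<in>I. v * x i) \<partial>PiM I (\<lambda>_. lborel))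
       = (\<integral>\<^sup>+y. ennreal (D (\<lambda>i\<in>I. y i / v) / v ^ card I) * f y \<partial>PiM I (\<lambda>_. lborel))"
proof -
  let ?L = "PiM I (\<lambda>_. lborel :: real measure)"
  have "(\<integral>\<^sup>+x. ennreal (D x) * f (\<lambda>i\<in>I. v * x i) \<partial>?L)
      = (\<integral>\<^sup>+x. (\<lambda>y. ennreal (D (\<lambda>i\<in>I. y i / v)) * f y) (\<lambda>i\<in>I. v * x i) \<partial>?L)"
  proof (rule nn_integral_cong)
    fix x assume "x \<in> space ?L"
    then have "(\<lambda>i\<in>I. (\<lambda>i\<in>I. v * x i) i / v) = x"
      using \<open>0 < v\<close> by (auto simp: space_PiM PiE_def extensional_def fun_eq_iff)
    then show "ennreal (D x) * f (\<lambda>i\<in>I. v * x i) = (\<lambda>y. ennreal (D (\<lambda>i\<in>I. y i / v)) * f y) (\<lambda>i\<in>I. v * x i)"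
      by simp
  qed
  also have "\<dots> = ennreal (1 / v ^ card I) * (\<integral>\<^sup>+y. ennreal (D (\<lambda>i\<in>I. y i / v)) * f y \<partial>?L)"
    using assms(1,2) by (intro nn_integral_PiM_lborel_scale) auto
  also have "\<dots> = (\<integral>\<^sup>+y. ennreal (D (\<lambda>i\<in>I. y i / v) / v ^ card I) * f y \<partial>?L)"
  proof -
    have "ennreal (D (\<lambda>i\<in>I. y i / v) / v ^ card I) = ennreal (1 / v ^ card I) * ennreal (D (\<lambda>i\<in>I. y i / v))" for y
      using assms(2,3) by (simp add: ennreal_mult[symmetric])
    then show ?thesis
      by (simp add: nn_integral_cmult[symmetric] mult.assoc)
  qed
  finally show ?thesis .
qed

lemma PiM_density_lborel:
  fixes g :: "real \<Rightarrow> ennreal"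
  assumes "finite I" "g \<in> borel_measurable borel" "sigma_finite_measure (density lborel g)"
  shows "PiM I (\<lambda>_. density lborel g) = density (PiM I (\<lambda>_. lborel)) (\<lambda>x. \<Prod>i\<in>I. g (x i))"
proof -
  interpret D: product_sigma_finite "\<lambda>_. density lborel g"
    using assms(3) by (simp add: product_sigma_finite_def)
  interpret L: product_sigma_finite "\<lambda>_. lborel :: real measure" ..
  note [measurable] = assms(2)
  show ?thesis
  proof (rule D.PiM_eqI[symmetric])
    show "sets (density (PiM I (\<lambda>_. lborel)) (\<lambda>x. \<Prod>i\<in>I. g (x i))) = sets (PiM I (\<lambda>_. density lborel g))"
      by (auto intro!: sets_PiM_cong)
    fix A assume A: "\<And>i. i \<in> I \<Longrightarrow> A i \<in> sets (density lborel g)"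
    have "emeasure (density (PiM I (\<lambda>_. lborel)) (\<lambda>x. \<Prod>i\<in>I. g (x i))) (PiE I A)
        = (\<integral>\<^sup>+x. (\<Prod>i\<in>I. g (x i) * indicator (A i) (x i)) \<partial>PiM I (\<lambda>_. lborel))"
    proof (subst emeasure_density)
      show "(\<integral>\<^sup>+x. (\<Prod>i\<in>I. g (x i)) * indicator (PiE I A) x \<partial>PiM I (\<lambda>_. lborel))
          = (\<integral>\<^sup>+x. (\<Prod>i\<in>I. g (x i) * indicator (A i) (x i)) \<partial>PiM I (\<lambda>_. lborel))"
        by (intro nn_integral_cong)
           (auto simp: prod.distrib space_PiM PiE_iff indicator_def prod_zero_iff assms(1))
    qed (use A assms(1) in \<open>auto intro!: sets_PiM_I_finite\<close>)
    also have "\<dots> = (\<Prod>i\<in>I. emeasure (density lborel g) (A i))"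
      using A assms(1) by (subst L.product_nn_integral_prod) (auto simp: emeasure_density)
    finally show "emeasure (density (PiM I (\<lambda>_. lborel)) (\<lambda>x. \<Prod>i\<in>I. g (x i))) (PiE I A)
        = (\<Prod>i\<in>I. emeasure (density lborel g) (A i))" .
  qed (fact assms(1))
qed

lemma distr_borel_eq_lborel: "distr M borel X = distr M lborel X"
  by (rule distr_cong) simp_all

lemma distr_PiM_borel_eq_lborel:
  "distr M (PiM I (\<lambda>_. borel)) X = distr M (PiM I (\<lambda>_. lborel :: real measure)) X"
  by (rule distr_cong) (auto intro!: sets_PiM_cong)

lemma distributedI_nn_integral:
  assumes X: "X \<in> measurable M N" and h: "h \<in> borel_measurable N"
    and eq: "\<And>f. f \<in> borel_measurable N \<Longrightarrow> (\<integral>\<^sup>+\<omega>. f (X \<omega>) \<partial>M) = (\<integral>\<^sup>+x. h x * f x \<partial>N)"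
  shows "distributed M N X h"
  unfolding distributed_def
proof (intro conjI measure_eqI assms)
  fix A assume "A \<in> sets (distr M N X)"
  then have A: "A \<in> sets N" by simp
  have "emeasure (distr M N X) A = (\<integral>\<^sup>+x. indicator A x \<partial>distr M N X)"
    using A by simp
  also have "\<dots> = (\<integral>\<^sup>+\<omega>. indicator A (X \<omega>) \<partial>M)"
    using A X by (intro nn_integral_distr) auto
  also have "\<dots> = emeasure (density N h) A"
    using A h by (simp add: eq emeasure_density)
  finally show "emeasure (distr M N X) A = emeasure (density N h) A" .
qed simp

section \<open>Independent random variables\<close>

lemma (in prob_space) distr_pair_eq_pair_measure_if_indep_set:
  assumes [measurable]: "random_variable S X" "random_variable T Y"
    and indep: "indep_set {X -` A \<inter> space M | A. A \<in> sets S} {Y -` B \<inter> space M | B. B \<in> sets T}"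
  shows "distr M (S \<Otimes>\<^sub>M T) (\<lambda>\<omega>. (X \<omega>, Y \<omega>)) = distr M S X \<Otimes>\<^sub>M distr M T Y"
proof (rule pair_measure_eqI[symmetric])
  show "sigma_finite_measure (distr M S X)" "sigma_finite_measure (distr M T Y)"
    by (auto intro!: prob_space_imp_sigma_finite prob_space_distr)
  fix A B assume "A \<in> sets (distr M S X)" "B \<in> sets (distr M T Y)"
  then have AB [measurable]: "A \<in> sets S" "B \<in> sets T" by auto
  have "(\<lambda>\<omega>. (X \<omega>, Y \<omega>)) -` (A \<times> B) \<inter> space M = (X -` A \<inter> space M) \<inter> (Y -` B \<inter> space M)"
    by auto
  then have "emeasure (distr M (S \<Otimes>\<^sub>M T) (\<lambda>\<omega>. (X \<omega>, Y \<omega>))) (A \<times> B)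
      = prob ((X -` A \<inter> space M) \<inter> (Y -` B \<inter> space M))"
    by (simp add: emeasure_distr emeasure_eq_measure)
  also have "\<dots> = prob (X -` A \<inter> space M) * prob (Y -` B \<inter> space M)"
    using AB by (intro arg_cong[where f=ennreal] indep_setD[OF indep]) auto
  finally show "emeasure (distr M S X) A * emeasure (distr M T Y) B
      = emeasure (distr M (S \<Otimes>\<^sub>M T) (\<lambda>\<omega>. (X \<omega>, Y \<omega>))) (A \<times> B)"
    using AB by (simp add: emeasure_distr emeasure_eq_measure ennreal_mult')
qed (auto intro!: sets_pair_measure_cong)

lemma (in prob_space) nn_integral_indep_set_density:
  assumes X: "distributed M lborel X (\<lambda>x. ennreal (g x))" and [measurable]: "random_variable T Y"
    and indep: "indep_set {X -` A \<inter> space M | A. A \<in> sets borel} {Y -` B \<inter> space M | B. B \<in> sets T}"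
    and [measurable]: "(\<lambda>(x, y). F x y) \<in> borel_measurable (borel \<Otimes>\<^sub>M T)"
  shows "(\<integral>\<^sup>+\<omega>. F (X \<omega>) (Y \<omega>) \<partial>M) = (\<integral>\<^sup>+x. ennreal (g x) * (\<integral>\<^sup>+y. F x y \<partial>distr M T Y) \<partial>lborel)"
proof -
  interpret Y: sigma_finite_measure "distr M T Y"
    by (intro prob_space_imp_sigma_finite prob_space_distr) simp
  have [measurable]: "X \<in> borel_measurable M" "(\<lambda>x. ennreal (g x)) \<in> borel_measurable borel"
    using distributed_measurable[OF X] distributed_borel_measurable[OF X] by simp_all
  have "(\<integral>\<^sup>+\<omega>. F (X \<omega>) (Y \<omega>) \<partial>M) = (\<integral>\<^sup>+p. F (fst p) (snd p) \<partial>distr M (borel \<Otimes>\<^sub>M T) (\<lambda>\<omega>. (X \<omega>, Y \<omega>)))"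
    by (subst nn_integral_distr) (auto simp: split_beta')
  also have "\<dots> = (\<integral>\<^sup>+p. F (fst p) (snd p) \<partial>(distr M borel X \<Otimes>\<^sub>M distr M T Y))"
    using indep by (simp add: distr_pair_eq_pair_measure_if_indep_set)
  also have "\<dots> = (\<integral>\<^sup>+x. (\<integral>\<^sup>+y. F x y \<partial>distr M T Y) \<partial>distr M borel X)"
    by (subst Y.nn_integral_fst[symmetric]) (auto simp: split_beta')
  also have "\<dots> = (\<integral>\<^sup>+x. ennreal (g x) * (\<integral>\<^sup>+y. F x y \<partial>distr M T Y) \<partial>lborel)"
  proof -
    have "(\<lambda>x. \<integral>\<^sup>+y. F x y \<partial>distr M T Y) \<in> borel_measurable lborel"
      by (intro Y.borel_measurable_nn_integral) simp
    then show ?thesis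
      unfolding distributed_distr_eq_density[OF X, folded distr_borel_eq_lborel] by (simp add: nn_integral_density)
  qed
  finally show ?thesis .
qed

lemma (in prob_space) nn_integral_indep_vars_insert:
  fixes X :: "'i \<Rightarrow> 'a \<Rightarrow> real" and f :: "real \<Rightarrow> ('i \<Rightarrow> real) \<Rightarrow> ennreal"
  assumes I: "finite I" "k \<notin> I"
    and indep: "indep_vars (\<lambda>_. borel) X (insert k I)"
    and X: "\<And>i. i \<in> insert k I \<Longrightarrow> X i \<in> borel_measurable M"
    and [measurable]: "(\<lambda>(v, x). f v x) \<in> borel_measurable (borel \<Otimes>\<^sub>M PiM I (\<lambda>_. borel))"
  shows "(\<integral>\<^sup>+\<omega>. f (X k \<omega>) (\<lambda>i\<in>I. X i \<omega>) \<partial>M)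
       = (\<integral>\<^sup>+v. (\<integral>\<^sup>+x. f v x \<partial>PiM I (\<lambda>i. distr M borel (X i))) \<partial>distr M borel (X k))"
proof -
  \<comment> \<open>\<open>Y\<close> agrees with \<open>X\<close> on \<open>insert k I\<close> but is measurable for every index, as \<open>product_sigma_finite\<close> requires.\<close>
  define Y where "Y i = (if i \<in> insert k I then X i else (\<lambda>_. 0))" for i
  define \<mu> where "\<mu> i = distr M borel (Y i)" for i
  have [measurable]: "Y i \<in> borel_measurable M" for i
    using X by (simp add: Y_def)
  interpret \<mu>: product_sigma_finite \<mu>
    by (auto simp: product_sigma_finite_def \<mu>_def intro!: prob_space_imp_sigma_finite prob_space_distr)
  have "indep_vars (\<lambda>_. borel) Y (insert k I)"
    using indep by (subst indep_vars_cong[where Y=X]) (auto simp: Y_def)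
  then have joint: "distr M (PiM (insert k I) (\<lambda>_. borel)) (\<lambda>\<omega>. \<lambda>i\<in>insert k I. Y i \<omega>) = PiM (insert k I) \<mu>"
    unfolding \<mu>_def by (subst (asm) indep_vars_iff_distr_eq_PiM) auto
  have "sets (PiM (insert k I) \<mu>) = sets (PiM (insert k I) (\<lambda>_. borel))"
    by (intro sets_PiM_cong) (auto simp: \<mu>_def)
  then have [measurable]: "(\<lambda>w. f (w k) (\<lambda>i\<in>I. w i)) \<in> borel_measurable (PiM (insert k I) \<mu>)"
    by (simp cong: measurable_cong_sets) measurable
  have "(\<integral>\<^sup>+\<omega>. f (X k \<omega>) (\<lambda>i\<in>I. X i \<omega>) \<partial>M)
      = (\<integral>\<^sup>+w. f (w k) (\<lambda>i\<in>I. w i) \<partial>distr M (PiM (insert k I) (\<lambda>_. borel)) (\<lambda>\<omega>. \<lambda>i\<in>insert k I. Y i \<omega>))"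
  proof -
    have "(\<integral>\<^sup>+\<omega>. f (X k \<omega>) (\<lambda>i\<in>I. X i \<omega>) \<partial>M) = (\<integral>\<^sup>+\<omega>. f (Y k \<omega>) (\<lambda>i\<in>I. Y i \<omega>) \<partial>M)"
      by (simp add: Y_def cong: restrict_cong)
    then show ?thesis
      using I(2) by (subst nn_integral_distr) (auto intro!: nn_integral_cong arg_cong2[where f=f] simp: fun_eq_iff)
  qed
  also have "\<dots> = (\<integral>\<^sup>+v. (\<integral>\<^sup>+x. f v x \<partial>PiM I \<mu>) \<partial>\<mu> k)"
    using I unfolding joint
    by (subst \<mu>.product_nn_integral_insert_rev)
       (auto intro!: nn_integral_cong arg_cong2[where f=f] simp: space_PiM PiE_def extensional_def fun_eq_iff)
  also have "PiM I \<mu> = PiM I (\<lambda>i. distr M borel (X i))"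
    by (intro PiM_cong) (simp_all add: \<mu>_def Y_def)
  also have "\<mu> k = distr M borel (X k)"
    by (simp add: \<mu>_def Y_def)
  finally show ?thesis .
qed

lemma (in prob_space) PiM_distr_eq_density_if_distributed:
  fixes X :: "'i \<Rightarrow> 'a \<Rightarrow> real"
  assumes "finite I" "I \<noteq> {}" "q \<in> borel_measurable borel"
    and X: "\<And>i. i \<in> I \<Longrightarrow> distributed M lborel (X i) (\<lambda>x. ennreal (q x))"
  shows "PiM I (\<lambda>i. distr M borel (X i)) = density (PiM I (\<lambda>_. lborel)) (\<lambda>x. \<Prod>i\<in>I. ennreal (q (x i)))"
proof -
  obtain j where "j \<in> I"
    using assms(2) by blast
  then have "prob_space (density lborel (\<lambda>x. ennreal (q x)))"
    using prob_space_distr[OF distributed_measurable[OF X]] distributed_distr_eq_density[OF X] by auto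
  then have "PiM I (\<lambda>_. density lborel (\<lambda>x. ennreal (q x))) = density (PiM I (\<lambda>_. lborel)) (\<lambda>x. \<Prod>i\<in>I. ennreal (q (x i)))"
    using assms(1,3) by (intro PiM_density_lborel) (auto intro: prob_space_imp_sigma_finite)
  moreover have "PiM I (\<lambda>i. distr M borel (X i)) = PiM I (\<lambda>_. density lborel (\<lambda>x. ennreal (q x)))"
    using distributed_distr_eq_density[OF X] by (intro PiM_cong) (auto simp: distr_borel_eq_lborel)
  ultimately show ?thesis
    by simp
qed

lemma (in prob_space) distributed_scale_mixture:
  fixes X :: "'i \<Rightarrow> 'a \<Rightarrow> real" and p q :: "real \<Rightarrow> real"
  assumes I: "finite I" "I \<noteq> {}" "k \<notin> I"
    and indep: "indep_vars (\<lambda>_. borel) X (insert k I)"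
    and Xk: "distributed M lborel (X k) (\<lambda>v. ennreal (p v))"
    and p_nonneg: "\<And>v. 0 \<le> p v" and p_pos: "\<And>v. v \<le> 0 \<Longrightarrow> p v = 0"
    and [measurable]: "p \<in> borel_measurable borel"
    and Xi: "\<And>i. i \<in> I \<Longrightarrow> distributed M lborel (X i) (\<lambda>x. ennreal (q x))"
    and q_nonneg: "\<And>x. 0 \<le> q x" and [measurable]: "q \<in> borel_measurable borel"
  shows "distributed M (PiM I (\<lambda>_. lborel)) (\<lambda>\<omega>. \<lambda>i\<in>I. X k \<omega> * X i \<omega>)
           (\<lambda>x. \<integral>\<^sup>+v. ennreal (p v * (\<Prod>i\<in>I. q (x i / v)) / v ^ card I) \<partial>lborel)"
proof -
  let ?L = "PiM I (\<lambda>_. lborel :: real measure)"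
  interpret L: product_sigma_finite "\<lambda>_. lborel :: real measure" ..
  interpret L: sigma_finite_measure ?L
    using L.sigma_finite I(1) by blast
  interpret LL: pair_sigma_finite lborel ?L ..
  have [measurable]: "X i \<in> borel_measurable M" if "i \<in> insert k I" for i
    using that distributed_measurable[OF Xk] distributed_measurable[OF Xi] by auto
  have law_k: "distr M borel (X k) = density lborel (\<lambda>v. ennreal (p v))"
    using distributed_distr_eq_density[OF Xk] by (simp add: distr_borel_eq_lborel)
  have law_I: "PiM I (\<lambda>i. distr M borel (X i)) = density ?L (\<lambda>x. \<Prod>i\<in>I. ennreal (q (x i)))"
    using I Xi by (intro PiM_distr_eq_density_if_distributed) auto
  show ?thesis
  proof (rule distributedI_nn_integral)
    fix f :: "('i \<Rightarrow> real) \<Rightarrow> ennreal" assume [measurable]: "f \<in> borel_measurable ?L"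
    have "(\<integral>\<^sup>+\<omega>. f (\<lambda>i\<in>I. X k \<omega> * X i \<omega>) \<partial>M)
        = (\<integral>\<^sup>+v. (\<integral>\<^sup>+x. f (\<lambda>i\<in>I. v * x i) \<partial>PiM I (\<lambda>i. distr M borel (X i))) \<partial>distr M borel (X k))"
      using I indep by (subst nn_integral_indep_vars_insert[symmetric]) (auto simp: split_beta' cong: restrict_cong)
    also have "\<dots> = (\<integral>\<^sup>+v. ennreal (p v) * (\<integral>\<^sup>+x. (\<Prod>i\<in>I. ennreal (q (x i))) * f (\<lambda>i\<in>I. v * x i) \<partial>?L) \<partial>lborel)"
      unfolding law_k law_I by (simp add: nn_integral_density L.borel_measurable_nn_integral)
    also have "\<dots> = (\<integral>\<^sup>+v. (\<integral>\<^sup>+y. ennreal (p v * (\<Prod>i\<in>I. q (y i / v)) / v ^ card I) * f y \<partial>?L) \<partial>lborel)"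
    proof (rule nn_integral_cong)
      fix v :: real
      show "ennreal (p v) * (\<integral>\<^sup>+x. (\<Prod>i\<in>I. ennreal (q (x i))) * f (\<lambda>i\<in>I. v * x i) \<partial>?L)
          = (\<integral>\<^sup>+y. ennreal (p v * (\<Prod>i\<in>I. q (y i / v)) / v ^ card I) * f y \<partial>?L)"
      proof (cases "0 < v")
        case True
        have "(\<integral>\<^sup>+x. (\<Prod>i\<in>I. ennreal (q (x i))) * f (\<lambda>i\<in>I. v * x i) \<partial>?L)
            = (\<integral>\<^sup>+x. ennreal (\<Prod>i\<in>I. q (x i)) * f (\<lambda>i\<in>I. v * x i) \<partial>?L)"
          using q_nonneg by (simp add: prod_ennreal)
        also have "\<dots> = (\<integral>\<^sup>+y. ennreal ((\<Prod>i\<in>I. q (y i / v)) / v ^ card I) * f y \<partial>?L)"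
          using I(1) True q_nonneg by (subst nn_integral_PiM_lborel_scale_density) (auto intro!: prod_nonneg)
        moreover have "ennreal (p v * (\<Prod>i\<in>I. q (y i / v)) / v ^ card I)
            = ennreal (p v) * ennreal ((\<Prod>i\<in>I. q (y i / v)) / v ^ card I)" for y
          using True p_nonneg q_nonneg by (simp add: ennreal_mult[symmetric] prod_nonneg)
        ultimately show ?thesis
          by (simp add: nn_integral_cmult[symmetric] mult.assoc)
      qed (simp add: p_pos)
    qed
    also have "\<dots> = (\<integral>\<^sup>+y. (\<integral>\<^sup>+v. ennreal (p v * (\<Prod>i\<in>I. q (y i / v)) / v ^ card I) \<partial>lborel) * f y \<partial>?L)"
      by (subst LL.Fubini'[symmetric]) (auto intro!: nn_integral_cong nn_integral_multc)
    finally show "(\<integral>\<^sup>+\<omega>. f (\<lambda>i\<in>I. X k \<omega> * X i \<omega>) \<partial>M)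
        = (\<integral>\<^sup>+y. (\<integral>\<^sup>+v. ennreal (p v * (\<Prod>i\<in>I. q (y i / v)) / v ^ card I) \<partial>lborel) * f y \<partial>?L)" .
  qed (auto intro!: lborel.borel_measurable_nn_integral)
qed

section \<open>Scaling a vector supported on a hyperplane of fixed coordinate sum\<close>

definition complete_to_sum :: "nat \<Rightarrow> real \<Rightarrow> (nat \<Rightarrow> real) \<Rightarrow> nat \<Rightarrow> real" where
  "complete_to_sum n s y = (\<lambda>i\<in>{..<Suc n}. if i < n then y i else s - (\<Sum>j<n. y j))"

lemma measurable_complete_to_sum [measurable (raw)]:
  assumes "s \<in> borel_measurable M" "\<And>i. i < n \<Longrightarrow> (\<lambda>x. y x i) \<in> borel_measurable M"
  shows "(\<lambda>x. complete_to_sum n (s x) (y x)) \<in> measurable M (PiM {..<Suc n} (\<lambda>_. borel))"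
  unfolding complete_to_sum_def
proof (rule measurable_restrict)
  fix i assume "i \<in> {..<Suc n}"
  show "(\<lambda>x. if i < n then y x i else s x - (\<Sum>j<n. y x j)) \<in> borel_measurable M"
    using assms by (cases "i < n") auto
qed

lemma sum_complete_to_sum: "(\<Sum>i<Suc n. complete_to_sum n s y i) = s"
  by (simp add: complete_to_sum_def)

lemma complete_to_sum_scale:
  "(\<lambda>i\<in>{..<Suc n}. z * complete_to_sum n 1 u i) = complete_to_sum n z (\<lambda>i\<in>{..<n}. z * u i)"
  by (auto simp: complete_to_sum_def fun_eq_iff sum_distrib_left[symmetric] algebra_simps)

lemma complete_to_sum_upd:
  "y \<in> extensional {..<n} \<Longrightarrow> complete_to_sum n ((\<Sum>j<n. y j) + w) y = y(n := w)"
  by (auto simp: complete_to_sum_def fun_eq_iff extensional_def)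

lemma nn_integral_complete_to_sum:
  assumes [measurable]: "G \<in> borel_measurable (PiM {..<Suc n} (\<lambda>_. lborel))"
  shows "(\<integral>\<^sup>+y. (\<integral>\<^sup>+z. G (complete_to_sum n z y) \<partial>lborel) \<partial>PiM {..<n} (\<lambda>_. lborel))
       = (\<integral>\<^sup>+x. G x \<partial>PiM {..<Suc n} (\<lambda>_. lborel))"
proof -
  interpret L: product_sigma_finite "\<lambda>_. lborel :: real measure" ..
  have "(\<integral>\<^sup>+z. G (complete_to_sum n z y) \<partial>lborel) = (\<integral>\<^sup>+w. G (y(n := w)) \<partial>lborel)"
    if "y \<in> space (PiM {..<n} (\<lambda>_. lborel))" for y
  proof -
    have "y \<in> extensional {..<n}"
      using that by (simp add: space_PiM PiE_def)
    then show ?thesis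
      using nn_integral_real_affine[where c=1 and t="\<Sum>j<n. y j" and f="\<lambda>z. G (complete_to_sum n z y)"]
      by (simp add: complete_to_sum_upd)
  qed
  then have "(\<integral>\<^sup>+y. (\<integral>\<^sup>+z. G (complete_to_sum n z y) \<partial>lborel) \<partial>PiM {..<n} (\<lambda>_. lborel))
      = (\<integral>\<^sup>+y. (\<integral>\<^sup>+w. G (y(n := w)) \<partial>lborel) \<partial>PiM {..<n} (\<lambda>_. lborel))"
    by (rule nn_integral_cong) simp
  also have "\<dots> = (\<integral>\<^sup>+x. G x \<partial>PiM {..<Suc n} (\<lambda>_. lborel))"
    using assms unfolding lessThan_Suc by (simp add: L.product_nn_integral_insert)
  finally show ?thesis .
qed

lemma nn_integral_scaled_distr_complete_to_sum:
  assumes "0 < z" and D: "\<And>u. 0 \<le> D u" "D \<in> borel_measurable (PiM {..<n} (\<lambda>_. lborel))"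
    and f: "f \<in> borel_measurable (PiM {..<Suc n} (\<lambda>_. borel))"
  shows "(\<integral>\<^sup>+u. f (\<lambda>i\<in>{..<Suc n}. z * u i)
            \<partial>distr (density (PiM {..<n} (\<lambda>_. lborel)) (\<lambda>u. ennreal (D u))) (PiM {..<Suc n} (\<lambda>_. borel))
                   (complete_to_sum n 1))
       = (\<integral>\<^sup>+y. ennreal (D (\<lambda>i\<in>{..<n}. y i / z) / z ^ n) * f (complete_to_sum n z y) \<partial>PiM {..<n} (\<lambda>_. lborel))"
proof -
  note [measurable] = D(2) f
  have "(\<lambda>u. f (\<lambda>i\<in>{..<Suc n}. z * u i)) \<in> borel_measurable (PiM {..<Suc n} (\<lambda>_. borel))"
    by measurable
  then have "(\<lambda>u. f (\<lambda>i\<in>{..<Suc n}. z * complete_to_sum n 1 u i)) \<in> borel_measurable (PiM {..<n} (\<lambda>_. lborel))"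
    by (rule measurable_compose[rotated]) measurable
  then have "(\<integral>\<^sup>+u. f (\<lambda>i\<in>{..<Suc n}. z * u i)
            \<partial>distr (density (PiM {..<n} (\<lambda>_. lborel)) (\<lambda>u. ennreal (D u))) (PiM {..<Suc n} (\<lambda>_. borel))
                   (complete_to_sum n 1))
      = (\<integral>\<^sup>+u. ennreal (D u) * f (complete_to_sum n z (\<lambda>i\<in>{..<n}. z * u i)) \<partial>PiM {..<n} (\<lambda>_. lborel))"
    by (simp add: nn_integral_distr nn_integral_density complete_to_sum_scale)
  also have "\<dots> = (\<integral>\<^sup>+y. ennreal (D (\<lambda>i\<in>{..<n}. y i / z) / z ^ n) * f (complete_to_sum n z y) \<partial>PiM {..<n} (\<lambda>_. lborel))"
  proof -
    have f_complete: "(\<lambda>y. f (complete_to_sum n z y)) \<in> borel_measurable (PiM {..<n} (\<lambda>_. lborel))"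
      by measurable
    show ?thesis
      using nn_integral_PiM_lborel_scale_density[OF finite_lessThan assms(1) D f_complete] by simp
  qed
  finally show ?thesis .
qed

lemma (in prob_space) distributed_mult_complete_to_sum:
  fixes Z :: "'a \<Rightarrow> real" and U :: "'a \<Rightarrow> nat \<Rightarrow> real"
    and g :: "real \<Rightarrow> real" and D :: "(nat \<Rightarrow> real) \<Rightarrow> real"
  assumes [measurable]: "U \<in> measurable M (PiM {..<Suc n} (\<lambda>_. borel))"
    and indep: "indep_set {Z -` A \<inter> space M | A. A \<in> sets borel}
      {U -` B \<inter> space M | B. B \<in> sets (PiM {..<Suc n} (\<lambda>_. borel))}"
    and Z: "distributed M lborel Z (\<lambda>z. ennreal (g z))"
    and g_nonneg: "\<And>z. 0 \<le> g z" and g_pos: "\<And>z. z \<le> 0 \<Longrightarrow> g z = 0"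
    and [measurable]: "g \<in> borel_measurable borel"
    and U: "distr M (PiM {..<Suc n} (\<lambda>_. borel)) U
      = distr (density (PiM {..<n} (\<lambda>_. lborel)) (\<lambda>u. ennreal (D u)))
              (PiM {..<Suc n} (\<lambda>_. borel)) (complete_to_sum n 1)"
    and D_nonneg: "\<And>u. 0 \<le> D u" and [measurable]: "D \<in> borel_measurable (PiM {..<n} (\<lambda>_. lborel))"
  shows "distributed M (PiM {..<Suc n} (\<lambda>_. lborel)) (\<lambda>\<omega>. \<lambda>i\<in>{..<Suc n}. Z \<omega> * U \<omega> i)
    (\<lambda>x. ennreal (g (\<Sum>i<Suc n. x i) * D (\<lambda>i\<in>{..<n}. x i / (\<Sum>i<Suc n. x i)) / (\<Sum>i<Suc n. x i) ^ n))"
proof -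
  let ?S = "PiM {..<Suc n} (\<lambda>_. borel :: real measure)"
  let ?L = "PiM {..<Suc n} (\<lambda>_. lborel :: real measure)"
  let ?Q = "PiM {..<n} (\<lambda>_. lborel :: real measure)"
  define h where "h x = ennreal (g (\<Sum>i<Suc n. x i) * D (\<lambda>i\<in>{..<n}. x i / (\<Sum>i<Suc n. x i)) / (\<Sum>i<Suc n. x i) ^ n)"
    for x
  interpret Q: sigma_finite_measure ?Q
    by (rule product_sigma_finite.sigma_finite) (auto simp: product_sigma_finite_def lborel.sigma_finite_measure_axioms)
  interpret LQ: pair_sigma_finite lborel ?Q ..
  have [measurable]: "Z \<in> borel_measurable M"
    using distributed_measurable[OF Z] by simp
  have [measurable]: "h \<in> borel_measurable ?S" "h \<in> borel_measurable ?L"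
    unfolding h_def by measurable
  have h_complete: "h (complete_to_sum n z y) = ennreal (g z * D (\<lambda>i\<in>{..<n}. y i / z) / z ^ n)" for z y
    by (simp add: h_def sum_complete_to_sum complete_to_sum_def cong: restrict_cong)
  show ?thesis
    unfolding h_def[abs_def, symmetric]
  proof (rule distributedI_nn_integral)
    fix f :: "(nat \<Rightarrow> real) \<Rightarrow> ennreal" assume f: "f \<in> borel_measurable ?L"
    have "sets ?L = sets ?S"
      by (intro sets_PiM_cong) simp_all
    with f have [measurable]: "f \<in> borel_measurable ?S"
      by (simp cong: measurable_cong_sets)
    have "(\<integral>\<^sup>+\<omega>. f (\<lambda>i\<in>{..<Suc n}. Z \<omega> * U \<omega> i) \<partial>M)
        = (\<integral>\<^sup>+z. ennreal (g z) * (\<integral>\<^sup>+u. f (\<lambda>i\<in>{..<Suc n}. z * u i) \<partial>distr M ?S U) \<partial>lborel)"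
      by (rule nn_integral_indep_set_density[where F="\<lambda>z u. f (\<lambda>i\<in>{..<Suc n}. z * u i)", OF Z _ indep])
         (auto simp: split_beta')
    also have "\<dots> = (\<integral>\<^sup>+z. (\<integral>\<^sup>+y. h (complete_to_sum n z y) * f (complete_to_sum n z y) \<partial>?Q) \<partial>lborel)"
    proof (rule nn_integral_cong)
      fix z :: real
      show "ennreal (g z) * (\<integral>\<^sup>+u. f (\<lambda>i\<in>{..<Suc n}. z * u i) \<partial>distr M ?S U)
          = (\<integral>\<^sup>+y. h (complete_to_sum n z y) * f (complete_to_sum n z y) \<partial>?Q)"
      proof (cases "0 < z")
        case True
        have "ennreal (g z * D (\<lambda>i\<in>{..<n}. y i / z) / z ^ n) = ennreal (g z) * ennreal (D (\<lambda>i\<in>{..<n}. y i / z) / z ^ n)" for y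
          using True g_nonneg D_nonneg by (simp add: ennreal_mult[symmetric])
        then show ?thesis
          using True D_nonneg unfolding U
          by (simp add: h_complete nn_integral_scaled_distr_complete_to_sum nn_integral_cmult[symmetric] mult.assoc)
      qed (simp add: g_pos h_complete)
    qed
    also have "\<dots> = (\<integral>\<^sup>+x. h x * f x \<partial>?L)"
      by (subst LQ.Fubini'[symmetric]) (auto simp: split_beta' intro!: nn_integral_complete_to_sum)
    finally show "(\<integral>\<^sup>+\<omega>. f (\<lambda>i\<in>{..<Suc n}. Z \<omega> * U \<omega> i) \<partial>M) = (\<integral>\<^sup>+x. h x * f x \<partial>?L)" .
  qed simp_all
qed

section \<open>The Gamma, Beta and Dirichlet densities\<close>

lemma Gamma_plus1_real: "0 < (a::real) \<Longrightarrow> Gamma (a + 1) = a * Gamma a"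
  by (rule Gamma_plus1) (auto dest: nonpos_Ints_nonpos)

lemma Beta_1_right:
  assumes "0 < (a::real)"
  shows "Beta a 1 = 1 / a"
proof -
  have "Gamma a \<noteq> 0"
    using Gamma_real_pos[OF assms] by linarith
  then show ?thesis
    using assms by (simp add: Beta_def Gamma_plus1_real)
qed

lemma gamma_density_nonneg: "0 < a \<Longrightarrow> 0 \<le> gamma_density a x"
  by (simp add: gamma_density_def)

lemma dirichlet_density_nonneg:
  assumes "\<And>i. 0 < alpha i"
  shows "0 \<le> dirichlet_density (Suc n) alpha u"
proof -
  have "0 < (\<Sum>i<Suc n. alpha i)"
    using assms by (intro sum_pos) auto
  then have "0 < Gamma (\<Sum>i<Suc n. alpha i)" "0 < (\<Prod>i<Suc n. Gamma (alpha i))"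
    using assms by (auto intro!: prod_pos simp del: sum.lessThan_Suc prod.lessThan_Suc)
  then show ?thesis
    unfolding dirichlet_density_def Let_def
    by (simp del: sum.lessThan_Suc prod.lessThan_Suc add: prod_nonneg less_imp_le)
qed

lemma gamma_density_borel_measurable [measurable]: "gamma_density a \<in> borel_measurable borel"
  unfolding gamma_density_def by measurable

lemma dirichlet_density_cong:
  assumes "\<And>i. i < N - 1 \<Longrightarrow> u i = u' i"
  shows "dirichlet_density N alpha u = dirichlet_density N alpha u'"
proof -
  have "(\<lambda>i. if i < N - 1 then u i else 1 - (\<Sum>j<N - 1. u j)) = (\<lambda>i. if i < N - 1 then u' i else 1 - (\<Sum>j<N - 1. u' j))"
    using assms by (auto intro!: sum.cong)
  then show ?thesis
    by (simp only: dirichlet_density_def)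
qed

lemma dirichlet_density_borel_measurable [measurable]:
  "dirichlet_density N alpha \<in> borel_measurable (PiM {..<N - 1} (\<lambda>_. lborel))"
proof -
  have [measurable]: "(\<lambda>u. if i < N - 1 then u i else 0) \<in> borel_measurable (PiM {..<N - 1} (\<lambda>_. lborel))" for i
    by (cases "i < N - 1") auto
  have "(\<forall>i<N. P i) \<longleftrightarrow> (\<forall>i\<in>{..<N}. P i)" for P
    by auto
  then have "(\<lambda>u. dirichlet_density N alpha (\<lambda>i. if i < N - 1 then u i else 0))
      \<in> borel_measurable (PiM {..<N - 1} (\<lambda>_. lborel))"
    unfolding dirichlet_density_def Let_def by measurable
  moreover have "dirichlet_density N alpha (\<lambda>i. if i < N - 1 then u i else 0) = dirichlet_density N alpha u" for u
    by (rule dirichlet_density_cong) simp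
  ultimately show ?thesis
    by simp
qed

lemma dirichlet_measure_eq_distr_complete_to_sum:
  "dirichlet_measure (Suc n) alpha
     = distr (density (PiM {..<n} (\<lambda>_. lborel)) (\<lambda>u. ennreal (dirichlet_density (Suc n) alpha u)))
             (PiM {..<Suc n} (\<lambda>_. borel)) (complete_to_sum n 1)"
  unfolding dirichlet_measure_def complete_to_sum_def diff_Suc_1 ..

lemma tendsto_exp_neg_div_at_right_0:
  assumes "0 < (s::real)"
  shows "((\<lambda>v. exp (- s / v)) \<longlongrightarrow> 0) (at_right 0)"
  using assms by real_asymp

lemma has_integral_exp_neg_div_square:
  fixes s :: real
  assumes s: "0 < s"
  shows "((\<lambda>v. exp (- s / v) / v\<^sup>2) has_integral exp (- s) / s) {0..1}"
proof -
  define F where "F v = (if v \<le> 0 then 0 else exp (- s / v) / s)" for v :: real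
  have F_deriv: "(F has_real_derivative exp (- s / v) / v\<^sup>2) (at v)" if "0 < v" for v
  proof (rule has_field_derivative_transform_within_open[where S="{0<..}"])
    show "((\<lambda>v. exp (- s / v) / s) has_real_derivative exp (- s / v) / v\<^sup>2) (at v)"
      using that s by (auto intro!: derivative_eq_intros simp: field_simps power2_eq_square)
  qed (use that in \<open>auto simp: F_def\<close>)
  have "continuous_on {0..1} F"
  proof (clarsimp simp: continuous_on_eq_continuous_within)
    fix v :: real assume v: "0 \<le> v" "v \<le> 1"
    show "continuous (at v within {0..1}) F"
    proof (cases "v = 0")
      case True
      have "\<forall>\<^sub>F v in at_right 0. exp (- s / v) / s = F v"
        using eventually_at_right_less[of "0::real"] by eventually_elim (simp add: F_def)
      then have "(F \<longlongrightarrow> 0) (at_right 0)"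
        by (rule Lim_transform_eventually[OF tendsto_divide_zero[OF tendsto_exp_neg_div_at_right_0[OF s]]])
      then show ?thesis
        using True by (simp add: continuous_within at_within_Icc_at_right F_def)
    next
      case False
      then show ?thesis
        using v F_deriv[of v] by (metis DERIV_isCont continuous_at_imp_continuous_within less_eq_real_def)
    qed
  qed
  then have "((\<lambda>v. exp (- s / v) / v\<^sup>2) has_integral (F 1 - F 0)) {0..1}"
    using F_deriv
    by (intro fundamental_theorem_of_calculus_interior)
       (auto simp: has_real_derivative_iff_has_vector_derivative[symmetric])
  then show ?thesis
    by (simp add: F_def)
qed

lemma nn_integral_exp_neg_div_square:
  assumes "0 < s"
  shows "(\<integral>\<^sup>+v. ennreal (exp (- s / v) / v\<^sup>2) * indicator {0<..<1} v \<partial>lborel) = ennreal (exp (- s) / s)"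
proof -
  have "AE v in lborel. ennreal (exp (- s / v) / v\<^sup>2) * indicator {0<..<1} v
      = ennreal (exp (- s / v) / v\<^sup>2) * indicator {0..1} v"
    using AE_lborel_singleton[of 0] AE_lborel_singleton[of 1]
    by eventually_elim (auto simp: indicator_def)
  then show ?thesis
    using has_integral_exp_neg_div_square[OF assms]
    by (subst nn_integral_cong_AE) (auto intro!: nn_integral_has_integral_lebesgue')
qed

lemma powr_div_power_div_power:
  fixes t b :: real
  assumes "0 < t"
  shows "t powr b / t ^ m / (t powr b) ^ k = t powr (b - real m - b * real k)"
  using assms by (simp add: powr_diff powr_realpow[symmetric] powr_powr[symmetric] powr_power mult.commute)

lemma prod_gamma_density_div:
  assumes "finite I" "0 < t" "\<And>i. i \<in> I \<Longrightarrow> 0 < y i"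
  shows "(\<Prod>i\<in>I. gamma_density a (y i / t))
       = (\<Prod>i\<in>I. y i powr (a - 1)) / (t powr (a - 1)) ^ card I * exp (- (\<Sum>i\<in>I. y i) / t) / Gamma a ^ card I"
proof -
  have "(\<Prod>i\<in>I. gamma_density a (y i / t)) = (\<Prod>i\<in>I. y i powr (a - 1) / t powr (a - 1) * exp (- (y i / t)) / Gamma a)"
    using assms by (intro prod.cong) (auto simp: gamma_density_def powr_divide)
  also have "\<dots> = (\<Prod>i\<in>I. y i powr (a - 1)) / (t powr (a - 1)) ^ card I * (\<Prod>i\<in>I. exp (- (y i / t))) / Gamma a ^ card I"
    by (simp add: prod.distrib prod_dividef power_mult_distrib)
  also have "(\<Prod>i\<in>I. exp (- (y i / t))) = exp (- (\<Sum>i\<in>I. y i) / t)"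
    using assms(1) by (simp add: exp_sum[symmetric] sum_negf sum_divide_distrib)
  finally show ?thesis .
qed

section \<open>The common density of both vectors\<close>

definition gamma_dirichlet_density :: "nat \<Rightarrow> (nat \<Rightarrow> real) \<Rightarrow> real" where
  "gamma_dirichlet_density n x =
     (if \<forall>i<Suc n. 0 < x i
      then 1 / real n / Gamma (1 / real n) ^ Suc n * (\<Prod>i<Suc n. x i powr (1 / real n - 1))
           * (exp (- (\<Sum>i<Suc n. x i)) / (\<Sum>i<Suc n. x i))
      else 0)"

lemma beta_gamma_kernel_eq:
  assumes n: "0 < n" and x: "\<forall>i<Suc n. 0 < x i" and v: "0 < v" "v < 1"
  shows "beta_density (1 / real n) 1 v * (\<Prod>i<Suc n. gamma_density (1 / real n) (x i / v)) / v ^ Suc n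
    = 1 / real n / Gamma (1 / real n) ^ Suc n * (\<Prod>i<Suc n. x i powr (1 / real n - 1))
      * (exp (- (\<Sum>i<Suc n. x i) / v) / v\<^sup>2)"
proof -
  define a where "a = 1 / real n"
  have a: "0 < a" "a * real n = 1"
    using n by (simp_all add: a_def)
  have "v powr (a - 1) / v ^ Suc n / (v powr (a - 1)) ^ Suc n = v powr (- 2)"
    using v a(2) by (subst powr_div_power_div_power) (simp_all add: algebra_simps)
  also have "\<dots> = 1 / v\<^sup>2"
    using v by (simp add: powr_minus powr_realpow divide_inverse)
  finally have v_powers: "v powr (a - 1) / v ^ Suc n / (v powr (a - 1)) ^ Suc n = 1 / v\<^sup>2" .
  have "beta_density a 1 v * (\<Prod>i<Suc n. gamma_density a (x i / v)) / v ^ Suc n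
     = a * v powr (a - 1) * ((\<Prod>i<Suc n. x i powr (a - 1)) / (v powr (a - 1)) ^ Suc n
         * exp (- (\<Sum>i<Suc n. x i) / v) / Gamma a ^ Suc n) / v ^ Suc n"
    using v x a by (subst prod_gamma_density_div) (auto simp: beta_density_def Beta_1_right)
  also have "\<dots> = a / Gamma a ^ Suc n * (\<Prod>i<Suc n. x i powr (a - 1)) * exp (- (\<Sum>i<Suc n. x i) / v)
      * (v powr (a - 1) / v ^ Suc n / (v powr (a - 1)) ^ Suc n)"
    by (simp only: divide_inverse mult_ac inverse_mult_distrib)
  also have "\<dots> = a / Gamma a ^ Suc n * (\<Prod>i<Suc n. x i powr (a - 1)) * (exp (- (\<Sum>i<Suc n. x i) / v) / v\<^sup>2)"
    unfolding v_powers by simp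
  finally show ?thesis
    unfolding a_def .
qed

lemma nn_integral_beta_gamma_kernel:
  assumes n: "0 < n"
  shows "(\<integral>\<^sup>+v. ennreal (beta_density (1 / real n) 1 v * (\<Prod>i<Suc n. gamma_density (1 / real n) (x i / v)) / v ^ Suc n) \<partial>lborel)
       = ennreal (gamma_dirichlet_density n x)"
proof (cases "\<forall>i<Suc n. 0 < x i")
  case True
  define C where "C = 1 / real n / Gamma (1 / real n) ^ Suc n * (\<Prod>i<Suc n. x i powr (1 / real n - 1))"
  define s where "s = (\<Sum>i<Suc n. x i)"
  have s: "0 < s"
    unfolding s_def using True by (intro sum_pos) auto
  have C: "0 \<le> C"
    unfolding C_def using n
    by (auto intro!: mult_nonneg_nonneg divide_nonneg_nonneg prod_nonneg simp del: prod.lessThan_Suc)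
  have "(\<integral>\<^sup>+v. ennreal (beta_density (1 / real n) 1 v * (\<Prod>i<Suc n. gamma_density (1 / real n) (x i / v)) / v ^ Suc n) \<partial>lborel)
      = (\<integral>\<^sup>+v. ennreal C * (ennreal (exp (- s / v) / v\<^sup>2) * indicator {0<..<1} v) \<partial>lborel)"
    using beta_gamma_kernel_eq[OF n True] C
    by (intro nn_integral_cong)
       (auto simp: C_def s_def beta_density_def indicator_def ennreal_mult'[symmetric])
  also have "\<dots> = ennreal C * ennreal (exp (- s) / s)"
    using nn_integral_exp_neg_div_square[OF s] by (subst nn_integral_cmult) auto
  also have "\<dots> = ennreal (gamma_dirichlet_density n x)"
    using True C s by (simp add: gamma_dirichlet_density_def C_def s_def ennreal_mult'[symmetric])
  finally show ?thesis .
next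
  case False
  then obtain j where j: "j < Suc n" "x j \<le> 0"
    by auto
  have zero: "beta_density (1 / real n) 1 v * (\<Prod>i<Suc n. gamma_density (1 / real n) (x i / v)) / v ^ Suc n = 0"
    for v
  proof (cases "0 < v")
    case True
    then have "gamma_density (1 / real n) (x j / v) = 0"
      using j by (simp add: gamma_density_def zero_less_divide_iff)
    then have "(\<Prod>i<Suc n. gamma_density (1 / real n) (x i / v)) = 0"
      using j by (intro prod_zero) auto
    then show ?thesis
      by simp
  qed (simp add: beta_density_def)
  show ?thesis
    unfolding zero gamma_dirichlet_density_def if_not_P[OF False] by simp
qed

lemma dirichlet_density_normalized:
  fixes x :: "nat \<Rightarrow> real"
  assumes s: "0 < (\<Sum>i<Suc n. x i)"
  shows "dirichlet_density (Suc n) alpha (\<lambda>i\<in>{..<n}. x i / (\<Sum>i<Suc n. x i))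
       = (if \<forall>i<Suc n. 0 < x i
          then Gamma (\<Sum>i<Suc n. alpha i) / (\<Prod>i<Suc n. Gamma (alpha i))
               * (\<Prod>i<Suc n. (x i / (\<Sum>i<Suc n. x i)) powr (alpha i - 1))
          else 0)"
proof -
  define s where "s = (\<Sum>i<Suc n. x i)"
  define u where "u = (\<lambda>i\<in>{..<n}. x i / s)"
  have u: "(if i < n then u i else 1 - (\<Sum>j<n. u j)) = x i / s" if "i < Suc n" for i
  proof (cases "i < n")
    case False
    then have "i = n"
      using that by simp
    have "1 - (\<Sum>j<n. x j / s) = (s - (\<Sum>j<n. x j)) / s"
      using s by (simp add: s_def sum_divide_distrib[symmetric] field_simps)
    then show ?thesis
      using \<open>i = n\<close> by (simp add: s_def u_def)
  qed (simp add: u_def)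
  have positive_iff: "(\<forall>i<Suc n. 0 < (if i < n then u i else 1 - (\<Sum>j<n. u j))) \<longleftrightarrow> (\<forall>i<Suc n. 0 < x i)"
    using s u by (simp add: s_def zero_less_divide_iff)
  have powers: "(\<Prod>i<Suc n. (if i < n then u i else 1 - (\<Sum>j<n. u j)) powr (alpha i - 1))
      = (\<Prod>i<Suc n. (x i / s) powr (alpha i - 1))"
    using u by (intro prod.cong) simp_all
  show ?thesis
    unfolding dirichlet_density_def Let_def diff_Suc_1 s_def[symmetric] u_def[symmetric] positive_iff powers ..
qed

lemma dirichlet_density_normalized_pos:
  fixes x :: "nat \<Rightarrow> real" and n :: nat
  defines "a \<equiv> 1 / real n" and "s \<equiv> \<Sum>i<Suc n. x i"
  assumes n: "0 < n" and x: "\<forall>i<Suc n. 0 < x i"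
  shows "dirichlet_density (Suc n) (\<lambda>_. a) (\<lambda>i\<in>{..<n}. x i / s)
       = a * Gamma a / Gamma a ^ Suc n * ((\<Prod>i<Suc n. x i powr (a - 1)) / (s powr (a - 1)) ^ Suc n)"
proof -
  have s: "0 < s"
    unfolding s_def using x by (intro sum_pos) auto
  have "(\<Sum>i<Suc n. a) = a + 1"
    using n by (simp add: a_def field_simps)
  then have "Gamma (\<Sum>i<Suc n. a) = a * Gamma a"
    using n by (simp add: a_def Gamma_plus1_real)
  moreover have "(\<Prod>i<Suc n. (x i / s) powr (a - 1)) = (\<Prod>i<Suc n. x i powr (a - 1)) / (s powr (a - 1)) ^ Suc n"
    using x s by (simp add: powr_divide less_imp_le prod_dividef del: prod.lessThan_Suc)
  ultimately show ?thesis
    unfolding s_def dirichlet_density_normalized[OF s[unfolded s_def]] if_P[OF x] by simp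
qed

lemma gamma_density_mult_dirichlet_density:
  fixes x :: "nat \<Rightarrow> real"
  assumes n: "0 < n"
  shows "gamma_density (1 / real n) (\<Sum>i<Suc n. x i)
           * dirichlet_density (Suc n) (\<lambda>_. 1 / real n) (\<lambda>i\<in>{..<n}. x i / (\<Sum>i<Suc n. x i))
           / (\<Sum>i<Suc n. x i) ^ n
       = gamma_dirichlet_density n x"
proof -
  define a where "a = 1 / real n"
  define s where "s = (\<Sum>i<Suc n. x i)"
  consider "s \<le> 0" | "0 < s" "\<not> (\<forall>i<Suc n. 0 < x i)" | "\<forall>i<Suc n. 0 < x i"
    by fastforce
  then show ?thesis
  proof cases
    case 1
    then have not_positive: "\<not> (\<forall>i<Suc n. 0 < x i)"
      using sum_pos[of "{..<Suc n}" x] by (auto simp: s_def simp del: sum.lessThan_Suc)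
    show ?thesis
      unfolding gamma_dirichlet_density_def if_not_P[OF not_positive]
      using 1 by (simp add: s_def gamma_density_def)
  next
    case 2
    then show ?thesis
      unfolding gamma_dirichlet_density_def dirichlet_density_normalized[OF 2(1)[unfolded s_def]] if_not_P[OF 2(2)]
      by simp
  next
    case 3
    then have s: "0 < s"
      unfolding s_def by (intro sum_pos) auto
    have "a * real n = 1"
      using n by (simp add: a_def)
    then have "s powr (a - 1) / s ^ n / (s powr (a - 1)) ^ Suc n = s powr (- 1)"
      using s by (subst powr_div_power_div_power) (simp_all add: algebra_simps)
    then have s_powers: "s powr (a - 1) / s ^ n / (s powr (a - 1)) ^ Suc n = 1 / s"
      using s by (simp add: powr_minus divide_inverse)
    have "gamma_density a s * dirichlet_density (Suc n) (\<lambda>_. a) (\<lambda>i\<in>{..<n}. x i / s) / s ^ n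
        = s powr (a - 1) * exp (- s) / Gamma a * (a * Gamma a / Gamma a ^ Suc n
            * ((\<Prod>i<Suc n. x i powr (a - 1)) / (s powr (a - 1)) ^ Suc n)) / s ^ n"
      unfolding a_def s_def dirichlet_density_normalized_pos[OF n 3] gamma_density_def
      using s by (simp add: s_def)
    also have "\<dots> = a / Gamma a ^ Suc n * (\<Prod>i<Suc n. x i powr (a - 1)) * exp (- s)
        * (s powr (a - 1) / s ^ n / (s powr (a - 1)) ^ Suc n)"
      using n by (simp add: a_def field_simps)
    also have "\<dots> = gamma_dirichlet_density n x"
      unfolding s_powers using 3 by (simp add: gamma_dirichlet_density_def a_def s_def del: prod.lessThan_Suc sum.lessThan_Suc)
    finally show ?thesis
      unfolding a_def s_def .
  qed
qed

theorem lemma3: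
  fixes M :: "'a measure" and N :: nat
    and Zs :: "nat \<Rightarrow> 'a \<Rightarrow> real" and V Z :: "'a \<Rightarrow> real"
    and U :: "'a \<Rightarrow> nat \<Rightarrow> real"
  assumes "prob_space M"
    and "N \<ge> 2"
    and "prob_space.indep_vars M (\<lambda>_. borel) (\<lambda>i. if i < N then Zs i else V) {..N}"
    and "distributed M lborel V (\<lambda>x. ennreal (beta_density (1 / (real N - 1)) 1 x))"
    and "\<And>i. i < N \<Longrightarrow> distributed M lborel (Zs i) (\<lambda>x. ennreal (gamma_density (1 / (real N - 1)) x))"
    and "U \<in> measurable M (PiM {..<N} (\<lambda>_. borel))"
    and "prob_space.indep_set M {Z -` A \<inter> space M | A. A \<in> sets borel}
                              {U -` B \<inter> space M | B. B \<in> sets (PiM {..<N} (\<lambda>_. borel))}"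
    and "distributed M lborel Z (\<lambda>x. ennreal (gamma_density (1 / (real N - 1)) x))"
    and "distr M (PiM {..<N} (\<lambda>_. borel)) U = dirichlet_measure N (\<lambda>_. 1 / (real N - 1))"
  shows "distr M (PiM {..<N} (\<lambda>_. borel)) (\<lambda>\<omega>. \<lambda>i\<in>{..<N}. Z \<omega> * U \<omega> i)
       = distr M (PiM {..<N} (\<lambda>_. borel)) (\<lambda>\<omega>. \<lambda>i\<in>{..<N}. V \<omega> * Zs i \<omega>)"
proof -
  interpret prob_space M by fact
  define n where "n = N - 1"
  have N: "N = Suc n" and n: "0 < n" and a: "1 / (real N - 1) = 1 / real n"
    using assms(2) by (auto simp: n_def)
  have "distributed M (PiM {..<Suc n} (\<lambda>_. lborel)) (\<lambda>\<omega>. \<lambda>i\<in>{..<Suc n}. Z \<omega> * U \<omega> i)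
      (\<lambda>x. ennreal (gamma_dirichlet_density n x))"
    unfolding gamma_density_mult_dirichlet_density[OF n, symmetric]
    using assms(6-9) n dirichlet_density_borel_measurable[of "Suc n"]
    unfolding N a dirichlet_measure_eq_distr_complete_to_sum
    by (intro distributed_mult_complete_to_sum)
       (auto simp: gamma_density_def intro!: gamma_density_nonneg dirichlet_density_nonneg)
  moreover have "distributed M (PiM {..<Suc n} (\<lambda>_. lborel)) (\<lambda>\<omega>. \<lambda>i\<in>{..<Suc n}. V \<omega> * Zs i \<omega>)
      (\<lambda>x. ennreal (gamma_dirichlet_density n x))"
  proof -
    let ?X = "\<lambda>i. if i < Suc n then Zs i else V"
    have "insert (Suc n) {..<Suc n} = {..Suc n}"
      by auto
    then have "distributed M (PiM {..<Suc n} (\<lambda>_. lborel)) (\<lambda>\<omega>. \<lambda>i\<in>{..<Suc n}. ?X (Suc n) \<omega> * ?X i \<omega>)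
        (\<lambda>x. \<integral>\<^sup>+v. ennreal (beta_density (1 / real n) 1 v * (\<Prod>i\<in>{..<Suc n}. gamma_density (1 / real n) (x i / v))
                             / v ^ card {..<Suc n}) \<partial>lborel)"
      using assms(3-5) n unfolding N a
      by (intro distributed_scale_mixture)
         (auto simp: beta_density_def Beta_1_right intro!: gamma_density_nonneg)
    then show ?thesis
      unfolding card_lessThan nn_integral_beta_gamma_kernel[OF n] by (simp cong: restrict_cong)
  qed
  ultimately show ?thesis
    unfolding N distr_PiM_borel_eq_lborel by (simp add: distributed_distr_eq_density)
qed

end
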